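(* Let $(A,\succ,\prec,\omega)$ be a quadratic anti-pre-Novikov algebra and $s\in A\otimes A$ such that $s+\tau(s)$ is invariant. Define $P:A\to A$ by $P(x)=T_s\omega^\sharp(x)$. Then $s$ is a solution of the anti-pre-Novikov Yang–Baxter equation in $(A,\succ,\prec)$ if and only if for all $x,y\in A$: $P(x)\succ P(y)=P\big(P(x)\succ y+x\succ P(y)-x\succ T_{s+\tau(s)}\omega^\sharp(y)\big)$ and $P(x)\prec P(y)=P\big(P(x)\prec y+x\prec P(y)-x\prec T_{s+\tau(s)}\omega^\sharp(y)\big)$.
   Context: $A$ is finite-dimensional over a field $k$. An anti-pre-Novikov algebra is $(A,\succ,\prec)$ such that with $x\circ y=x\succ y+x\prec y$: $(x\circ y-y\circ x)\succ z=y\succ(x\succ z)-x\succ(y\succ z)$; $x\prec(y\circ z)=(y\succ x)\prec z-(x\prec y)\prec z-y\succ(x\prec z)$; $(x\circ y)\succ z=-(x\succ z)\prec y$; $(x\prec y)\prec z=(x\prec z)\prec y$; $(x\circ y-y\circ x)\prec z=x\succ(y\circ z)-y\succ(x\circ z)$. It is quadratic with respect to $\omega$ if $\omega$ is non-degenerate symmetric bilinear with $\omega(x\prec y,z)=-\omega(x,z\circ y)$, $\omega(x\succ y,z)=\omega(x\circ z+z\circ x,y)$. $\omega^\sharp:A\to A^*$ is $\langle\omega^\sharp(x),y\rangle=\omega(x,y)$. For $r\in A\otimes A$, $T_r:A^*\to A$ is $\langle T_r(\zeta),\eta\rangle=\langle r,\zeta\otimes\eta\rangle$; $\tau$ is the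 flip. With $L_\ast(x)y=x\ast y$, $R_\ast(x)y=y\ast x$, $x\odot y=x\succ y+y\prec x$, $L_{\star}=L_{\circ}+R_{\circ}$, $L_{\odot}=L_{\succ}+R_{\prec}$: $r$ is invariant if $(I\otimes L_{\star}(x)-L_{\succ}(x)\otimes I)r=0$ and $(L_{\circ}(x)\otimes I-I\otimes L_{\odot}(x))r=0$ for all $x$. For $s=\sum_i a_i\otimes b_i$ the anti-pre-Novikov Yang–Baxter equation is $\sum_{i,j}a_i\circ a_j\otimes b_i\otimes b_j+\sum_{i,j}a_j\otimes a_i\otimes(b_i\odot b_j)+\sum_{i,j}a_i\otimes(b_i\prec a_j)\otimes b_j=0$. *)

theory Defs
  imports Main
begin

text \<open>A finite-dimensional vector space over the field 'k is modelled as
  the coordinate space 'n \<Rightarrow> 'k with 'n a finite index type (a fixed basis).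
  A tensor in A \<otimes> A is given by its coefficient function 'n \<Rightarrow> 'n \<Rightarrow> 'k
  w.r.t. the basis e_i \<otimes> e_j; a tensor in A \<otimes> A \<otimes> A by 'n \<Rightarrow> 'n \<Rightarrow> 'n \<Rightarrow> 'k.\<close>

type_synonym ('k, 'n) vec = "'n \<Rightarrow> 'k"
type_synonym ('k, 'n) binop = "('k, 'n) vec \<Rightarrow> ('k, 'n) vec \<Rightarrow> ('k, 'n) vec"

definition vadd :: "('k::field, 'n) vec \<Rightarrow> ('k, 'n) vec \<Rightarrow> ('k, 'n) vec" where
  "vadd x y = (\<lambda>i. x i + y i)"

definition vsub :: "('k::field, 'n) vec \<Rightarrow> ('k, 'n) vec \<Rightarrow> ('k, 'n) vec" where
  "vsub x y = (\<lambda>i. x i - y i)"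

definition vsmult :: "'k::field \<Rightarrow> ('k, 'n) vec \<Rightarrow> ('k, 'n) vec" where
  "vsmult c x = (\<lambda>i. c * x i)"

definition vzero :: "('k::field, 'n) vec" where
  "vzero = (\<lambda>i. 0)"

definition bvec :: "'n \<Rightarrow> ('k::field, 'n) vec" where
  "bvec i = (\<lambda>j. if j = i then 1 else 0)"

definition bilinear_op :: "('k::field, 'n) binop \<Rightarrow> bool" where
  "bilinear_op f \<longleftrightarrow>
     (\<forall>x y z. f (vadd x y) z = vadd (f x z) (f y z)) \<and>
     (\<forall>x y z. f x (vadd y z) = vadd (f x y) (f x z)) \<and>
     (\<forall>c x y. f (vsmult c x) y = vsmult c (f x y)) \<and>
     (\<forall>c x y. f x (vsmult c y) = vsmult c (f x y))"

definition bilinear_form :: "(('k::field, 'n) vec \<Rightarrow> ('k, 'n) vec \<Rightarrow> 'k) \<Rightarrow> bool" where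
  "bilinear_form w \<longleftrightarrow>
     (\<forall>x y z. w (vadd x y) z = w x z + w y z) \<and>
     (\<forall>x y z. w x (vadd y z) = w x y + w x z) \<and>
     (\<forall>c x y. w (vsmult c x) y = c * w x y) \<and>
     (\<forall>c x y. w x (vsmult c y) = c * w x y)"

definition circ_op :: "('k::field, 'n) binop \<Rightarrow> ('k, 'n) binop \<Rightarrow> ('k, 'n) binop" where
  "circ_op sc pr x y = vadd (sc x y) (pr x y)"

definition odot_op :: "('k::field, 'n) binop \<Rightarrow> ('k, 'n) binop \<Rightarrow> ('k, 'n) binop" where
  "odot_op sc pr x y = vadd (sc x y) (pr y x)"

definition anti_pre_Novikov :: "('k::field, 'n) binop \<Rightarrow> ('k, 'n) binop \<Rightarrow> bool" where
  "anti_pre_Novikov sc pr \<longleftrightarrow> bilinear_op sc \<and> bilinear_op pr \<and>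
     (\<forall>x y z. sc (vsub (circ_op sc pr x y) (circ_op sc pr y x)) z
                = vsub (sc y (sc x z)) (sc x (sc y z))) \<and>
     (\<forall>x y z. pr x (circ_op sc pr y z)
                = vsub (vsub (pr (sc y x) z) (pr (pr x y) z)) (sc y (pr x z))) \<and>
     (\<forall>x y z. sc (circ_op sc pr x y) z = vsmult (-1) (pr (sc x z) y)) \<and>
     (\<forall>x y z. pr (pr x y) z = pr (pr x z) y) \<and>
     (\<forall>x y z. pr (vsub (circ_op sc pr x y) (circ_op sc pr y x)) z
                = vsub (sc x (circ_op sc pr y z)) (sc y (circ_op sc pr x z)))"

definition quadratic_apN ::
  "('k::field, 'n) binop \<Rightarrow> ('k, 'n) binop \<Rightarrow> (('k, 'n) vec \<Rightarrow> ('k, 'n) vec \<Rightarrow> 'k) \<Rightarrow> bool" where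
  "quadratic_apN sc pr w \<longleftrightarrow> anti_pre_Novikov sc pr \<and> bilinear_form w \<and>
     (\<forall>x y. w x y = w y x) \<and>
     (\<forall>x. (\<forall>y. w x y = 0) \<longrightarrow> x = vzero) \<and>
     (\<forall>x y z. w (pr x y) z = - w x (circ_op sc pr z y)) \<and>
     (\<forall>x y z. w (sc x y) z = w (vadd (circ_op sc pr x z) (circ_op sc pr z x)) y)"

definition omega_sharp :: "(('k::field, 'n) vec \<Rightarrow> ('k, 'n) vec \<Rightarrow> 'k) \<Rightarrow> ('k, 'n) vec \<Rightarrow> (('k, 'n) vec \<Rightarrow> 'k)" where
  "omega_sharp w x = (\<lambda>y. w x y)"

text \<open>T_r : A^* \<rightarrow> A with \<langle>T_r \<zeta>, \<eta>\<rangle> = \<langle>r, \<zeta> \<otimes> \<eta>\<rangle>, for r = \<Sum> r_ij e_i \<otimes> e_j,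
  i.e. T_r \<zeta> = \<Sum>_ij r_ij \<zeta>(e_i) e_j.\<close>
definition T_map :: "('n::finite \<Rightarrow> 'n \<Rightarrow> 'k::field) \<Rightarrow> (('k, 'n) vec \<Rightarrow> 'k) \<Rightarrow> ('k, 'n) vec" where
  "T_map r \<zeta> = (\<lambda>j. \<Sum>i\<in>UNIV. r i j * \<zeta> (bvec i))"

definition flip :: "('n \<Rightarrow> 'n \<Rightarrow> 'k) \<Rightarrow> ('n \<Rightarrow> 'n \<Rightarrow> 'k)" where
  "flip r = (\<lambda>i j. r j i)"

definition tadd :: "('n \<Rightarrow> 'n \<Rightarrow> 'k::field) \<Rightarrow> ('n \<Rightarrow> 'n \<Rightarrow> 'k) \<Rightarrow> ('n \<Rightarrow> 'n \<Rightarrow> 'k)" where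
  "tadd r t = (\<lambda>i j. r i j + t i j)"

text \<open>(f \<otimes> g) r for linear maps f, g and r = \<Sum> r_ij e_i \<otimes> e_j.\<close>
definition tmap2 ::
  "(('k::field, 'n::finite) vec \<Rightarrow> ('k, 'n) vec) \<Rightarrow> (('k, 'n) vec \<Rightarrow> ('k, 'n) vec)
     \<Rightarrow> ('n \<Rightarrow> 'n \<Rightarrow> 'k) \<Rightarrow> ('n \<Rightarrow> 'n \<Rightarrow> 'k)" where
  "tmap2 f g r = (\<lambda>p q. \<Sum>i\<in>UNIV. \<Sum>j\<in>UNIV. r i j * f (bvec i) p * g (bvec j) q)"

text \<open>Invariance: (I \<otimes> L_\<star>(x) - L_\<succ>(x) \<otimes> I) r = 0 and (L_\<circ>(x) \<otimes> I - I \<otimes> L_\<odot>(x)) r = 0,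
  where L_\<star>(x) y = x \<circ> y + y \<circ> x and L_\<odot>(x) y = x \<succ> y + y \<prec> x.\<close>
definition invariant_tensor ::
  "('k::field, 'n::finite) binop \<Rightarrow> ('k, 'n) binop \<Rightarrow> ('n \<Rightarrow> 'n \<Rightarrow> 'k) \<Rightarrow> bool" where
  "invariant_tensor sc pr r \<longleftrightarrow> (\<forall>x.
     tmap2 id (\<lambda>y. vadd (circ_op sc pr x y) (circ_op sc pr y x)) r = tmap2 (\<lambda>y. sc x y) id r \<and>
     tmap2 (\<lambda>y. circ_op sc pr x y) id r = tmap2 id (\<lambda>y. odot_op sc pr x y) r)"

text \<open>Anti-pre-Novikov Yang--Baxter equation for s = \<Sum>_(i,j) s_ij e_i \<otimes> e_j
  (decomposition a_(i,j) = s_ij e_i, b_(i,j) = e_j); the left-hand side as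
  coefficient function of A \<otimes> A \<otimes> A.\<close>
definition apN_YBE :: "('k::field, 'n::finite) binop \<Rightarrow> ('k, 'n) binop \<Rightarrow> ('n \<Rightarrow> 'n \<Rightarrow> 'k) \<Rightarrow> bool" where
  "apN_YBE sc pr s \<longleftrightarrow>
     (\<lambda>p q t. \<Sum>i\<in>UNIV. \<Sum>j\<in>UNIV. \<Sum>k\<in>UNIV. \<Sum>l\<in>UNIV. s i j * s k l *
        (circ_op sc pr (bvec i) (bvec k) p * bvec j q * bvec l t
         + bvec k p * bvec i q * odot_op sc pr (bvec j) (bvec l) t
         + bvec i p * pr (bvec j) (bvec k) q * bvec l t)) = (\<lambda>p q t. 0)"

end

theory Submission
  imports Defs
begin

text \<open>
  Put Q = T_{\<tau>(s)} \<omega>^\<sharp> and R = P + Q = T_{s+\<tau>(s)} \<omega>^\<sharp>. Then Q is the \<omega>-adjoint of P,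
  so R is \<omega>-self-adjoint. Pairing the anti-pre-Novikov Yang--Baxter tensor of s with
  \<omega>^\<sharp>(x) \<otimes> \<omega>^\<sharp>(y) \<otimes> \<omega>^\<sharp>(z) gives the scalar
    C(x,y,z) = \<omega>(x, Q y \<circ> Q z) + \<omega>(P x, P y \<circ> z) - \<omega>(P x, y \<circ> Q z),
  so by non-degeneracy s solves the equation iff C vanishes identically. Read through \<omega>, the
  invariance of s + \<tau>(s) forces R to commute with left and right \<circ>-multiplications. With this,
  the two sides of the \<prec>-identity differ, paired with z, by -C(x,z,y), and those of the
  \<succ>-identity by C(y,x,z) + C(y,z,x); so both identities hold iff C vanishes.
\<close>

definition linear_map :: "(('k::field, 'n) vec \<Rightarrow> ('k, 'n) vec) \<Rightarrow> bool" where
  "linear_map f \<longleftrightarrow>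
     (\<forall>a b. f (vadd a b) = vadd (f a) (f b)) \<and> (\<forall>c a. f (vsmult c a) = vsmult c (f a))"

definition linear_functional :: "(('k::field, 'n) vec \<Rightarrow> 'k) \<Rightarrow> bool" where
  "linear_functional \<phi> \<longleftrightarrow>
     (\<forall>a b. \<phi> (vadd a b) = \<phi> a + \<phi> b) \<and> (\<forall>c a. \<phi> (vsmult c a) = c * \<phi> a)"

lemma vec_eq_sum_bvec: "(a :: ('k::field, 'n::finite) vec) = (\<lambda>j. \<Sum>i\<in>UNIV. a i * bvec i j)"
  by (simp add: bvec_def if_distrib[of "(*) _"] cong: if_cong)

lemma linear_functional_sum:
  assumes "linear_functional \<phi>" and "finite I"
  shows "\<phi> (\<lambda>j. \<Sum>i\<in>I. c i * v i j) = (\<Sum>i\<in>I. c i * \<phi> (v i))"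
  using \<open>finite I\<close>
proof (induction I rule: finite_induct)
  case empty
  have "\<phi> (\<lambda>j. 0) = \<phi> (vsmult 0 (\<lambda>j. 0))" by (simp add: vsmult_def)
  with assms(1) show ?case by (simp add: linear_functional_def)
next
  case (insert a F)
  then have "(\<lambda>j. \<Sum>i\<in>insert a F. c i * v i j)
      = vadd (vsmult (c a) (v a)) (\<lambda>j. \<Sum>i\<in>F. c i * v i j)"
    by (simp add: vadd_def vsmult_def)
  with insert assms(1) show ?case by (simp add: linear_functional_def)
qed

lemma linear_functional_expand:
  assumes "linear_functional \<phi>"
  shows "\<phi> (a :: ('k::field, 'n::finite) vec) = (\<Sum>i\<in>UNIV. a i * \<phi> (bvec i))"
  by (subst vec_eq_sum_bvec) (simp add: linear_functional_sum[OF assms])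

lemma linear_functional_vsub:
  "linear_functional \<phi> \<Longrightarrow> \<phi> (vsub a b) = \<phi> a - \<phi> b"
proof -
  assume "linear_functional \<phi>"
  moreover have "vsub a b = vadd a (vsmult (-1) b)" by (simp add: vsub_def vadd_def vsmult_def)
  ultimately show ?thesis by (simp add: linear_functional_def)
qed

lemma linear_functional_comp:
  "linear_functional \<phi> \<Longrightarrow> linear_map f \<Longrightarrow> linear_functional (\<lambda>y. \<phi> (f y))"
  unfolding linear_functional_def linear_map_def by auto

lemma linear_map_vadd:
  "linear_map f \<Longrightarrow> linear_map g \<Longrightarrow> linear_map (\<lambda>y. vadd (f y) (g y))"
  unfolding linear_map_def by (auto simp: vadd_def vsmult_def fun_eq_iff algebra_simps)

lemma bilinear_op_linear_right: "bilinear_op f \<Longrightarrow> linear_map (f x)"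
  unfolding bilinear_op_def linear_map_def by auto

lemma bilinear_op_linear_left: "bilinear_op f \<Longrightarrow> linear_map (\<lambda>y. f y x)"
  unfolding bilinear_op_def linear_map_def by auto

lemma bilinear_form_linear_right: "bilinear_form w \<Longrightarrow> linear_functional (w x)"
  unfolding bilinear_form_def linear_functional_def by auto

lemma bilinear_form_linear_left: "bilinear_form w \<Longrightarrow> linear_functional (\<lambda>y. w y x)"
  unfolding bilinear_form_def linear_functional_def by auto

lemma bilinear_op_circ_op:
  "bilinear_op sc \<Longrightarrow> bilinear_op pr \<Longrightarrow> bilinear_op (circ_op sc pr)"
  unfolding bilinear_op_def circ_op_def by (auto simp: vadd_def vsmult_def fun_eq_iff algebra_simps)

definition pairing2 ::
  "('n::finite \<Rightarrow> 'n \<Rightarrow> 'k::field) \<Rightarrow> (('k, 'n) vec \<Rightarrow> 'k) \<Rightarrow> (('k, 'n) vec \<Rightarrow> 'k) \<Rightarrow> 'k" where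
  "pairing2 r \<zeta> \<eta> = (\<Sum>i\<in>UNIV. \<Sum>j\<in>UNIV. r i j * (\<zeta> (bvec i) * \<eta> (bvec j)))"

definition pairing3 ::
  "('n::finite \<Rightarrow> 'n \<Rightarrow> 'n \<Rightarrow> 'k::field) \<Rightarrow> (('k, 'n) vec \<Rightarrow> 'k) \<Rightarrow> (('k, 'n) vec \<Rightarrow> 'k)
     \<Rightarrow> (('k, 'n) vec \<Rightarrow> 'k) \<Rightarrow> 'k" where
  "pairing3 T \<alpha> \<beta> \<gamma> =
     (\<Sum>p\<in>UNIV. \<Sum>q\<in>UNIV. \<Sum>t\<in>UNIV. T p q t * (\<alpha> (bvec p) * \<beta> (bvec q) * \<gamma> (bvec t)))"

lemma pairing2_flip: "pairing2 (flip r) \<zeta> \<eta> = pairing2 r \<eta> \<zeta>"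
  unfolding pairing2_def flip_def by (subst sum.swap) (simp add: mult_ac)

lemma pairing2_sum:
  "finite X \<Longrightarrow> pairing2 (\<lambda>p q. \<Sum>x\<in>X. T x p q) \<zeta> \<eta> = (\<Sum>x\<in>X. pairing2 (T x) \<zeta> \<eta>)"
  by (induction X rule: finite_induct) (simp_all add: pairing2_def distrib_right sum.distrib)

lemma pairing2_pure:
  assumes "linear_functional \<zeta>" and "linear_functional \<eta>"
  shows "pairing2 (\<lambda>p q. c * a p * b q) \<zeta> \<eta> = c * (\<zeta> a * \<eta> b)"
proof -
  have "\<zeta> a * \<eta> b = (\<Sum>i\<in>UNIV. \<Sum>j\<in>UNIV. a i * \<zeta> (bvec i) * (b j * \<eta> (bvec j)))"
    by (simp only: linear_functional_expand[OF assms(1), of a]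
        linear_functional_expand[OF assms(2), of b] sum_product)
  then show ?thesis by (simp add: pairing2_def sum_distrib_left mult_ac)
qed

lemma pairing3_sum:
  "finite X \<Longrightarrow>
     pairing3 (\<lambda>p q t. \<Sum>x\<in>X. T x p q t) \<alpha> \<beta> \<gamma> = (\<Sum>x\<in>X. pairing3 (T x) \<alpha> \<beta> \<gamma>)"
  by (induction X rule: finite_induct) (simp_all add: pairing3_def distrib_right sum.distrib)

lemma pairing3_add:
  "pairing3 (\<lambda>p q t. T p q t + U p q t) \<alpha> \<beta> \<gamma> = pairing3 T \<alpha> \<beta> \<gamma> + pairing3 U \<alpha> \<beta> \<gamma>"
  by (simp add: pairing3_def distrib_right sum.distrib)

lemma pairing3_scale: "pairing3 (\<lambda>p q t. c * T p q t) \<alpha> \<beta> \<gamma> = c * pairing3 T \<alpha> \<beta> \<gamma>"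
  by (simp add: pairing3_def sum_distrib_left mult.assoc)

lemma pairing3_pure:
  assumes "linear_functional \<alpha>" and "linear_functional \<beta>" and "linear_functional \<gamma>"
  shows "pairing3 (\<lambda>p q t. a p * b q * c t) \<alpha> \<beta> \<gamma> = \<alpha> a * \<beta> b * \<gamma> c"
proof -
  have "pairing3 (\<lambda>p q t. a p * b q * c t) \<alpha> \<beta> \<gamma>
      = (\<Sum>p\<in>UNIV. \<alpha> (bvec p) * pairing2 (\<lambda>q t. a p * b q * c t) \<beta> \<gamma>)"
    by (simp add: pairing3_def pairing2_def sum_distrib_left mult_ac)
  also have "\<dots> = (\<Sum>p\<in>UNIV. a p * \<alpha> (bvec p)) * (\<beta> b * \<gamma> c)"
    by (simp only: pairing2_pure[OF assms(2,3)])
       (simp add: sum_distrib_left sum_distrib_right mult_ac)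
  finally show ?thesis
    by (simp add: linear_functional_expand[OF assms(1), of a] mult.assoc)
qed

lemma linear_functional_T_map:
  assumes "linear_functional \<eta>"
  shows "\<eta> (T_map r \<zeta>) = pairing2 r \<zeta> \<eta>"
proof -
  have "\<eta> (T_map r \<zeta>) = (\<Sum>j\<in>UNIV. \<Sum>i\<in>UNIV. r i j * (\<zeta> (bvec i) * \<eta> (bvec j)))"
    by (subst linear_functional_expand[OF assms])
       (simp add: T_map_def sum_distrib_left sum_distrib_right mult_ac)
  also have "\<dots> = pairing2 r \<zeta> \<eta>"
    unfolding pairing2_def by (rule sum.swap)
  finally show ?thesis .
qed

lemma pairing2_tmap2:
  assumes "linear_functional \<zeta>" and "linear_functional \<eta>"
  shows "pairing2 (tmap2 f g r) \<zeta> \<eta> = pairing2 r (\<lambda>u. \<zeta> (f u)) (\<lambda>v. \<eta> (g v))"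
  by (simp add: tmap2_def pairing2_sum pairing2_pure[OF assms]) (simp add: pairing2_def)

lemma pairing2_swap_if_tmap2_eq:
  assumes "tmap2 f id r = tmap2 id g r"
    and "linear_functional \<zeta>" and "linear_functional \<eta>"
  shows "pairing2 r (\<lambda>u. \<zeta> (f u)) \<eta> = pairing2 r \<zeta> (\<lambda>v. \<eta> (g v))"
  using pairing2_tmap2[OF assms(2,3), of f id r] pairing2_tmap2[OF assms(2,3), of id g r]
  by (simp add: assms(1))

lemma omega_sharp_apply [simp]: "omega_sharp w x = w x"
  by (simp add: omega_sharp_def fun_eq_iff)

locale quadratic_apN_algebra =
  fixes sc pr :: "('k::field, 'n::finite) binop"
    and w :: "('k, 'n) vec \<Rightarrow> ('k, 'n) vec \<Rightarrow> 'k"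
  assumes quadratic: "quadratic_apN sc pr w"
begin

abbreviation circ :: "('k, 'n) binop" where
  "circ \<equiv> circ_op sc pr"

lemma bilinear_sc: "bilinear_op sc"
  and bilinear_pr: "bilinear_op pr"
  and bilinear_w: "bilinear_form w"
  and w_sym: "w x y = w y x"
  and w_nondegenerate: "(\<forall>y. w x y = 0) \<Longrightarrow> x = vzero"
  and w_pr: "w (pr x y) z = - w x (circ z y)"
  and w_sc: "w (sc x y) z = w (vadd (circ x z) (circ z x)) y"
  using quadratic unfolding quadratic_apN_def anti_pre_Novikov_def by blast+

lemma bilinear_circ: "bilinear_op circ"
  by (rule bilinear_op_circ_op[OF bilinear_sc bilinear_pr])

lemma linear_functional_w: "linear_functional (w u)"
  by (rule bilinear_form_linear_right[OF bilinear_w])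

lemma w_vadd_left: "w (vadd a b) c = w a c + w b c"
  and w_vadd_right: "w c (vadd a b) = w c a + w c b"
  using bilinear_w unfolding bilinear_form_def by blast+

lemma w_vsub_left: "w (vsub a b) c = w a c - w b c"
  by (rule linear_functional_vsub[OF bilinear_form_linear_left[OF bilinear_w]])

lemma w_vsub_right: "w c (vsub a b) = w c a - w c b"
  by (rule linear_functional_vsub[OF linear_functional_w])

lemma circ_vadd_left: "circ (vadd a b) c = vadd (circ a c) (circ b c)"
  and circ_vadd_right: "circ c (vadd a b) = vadd (circ c a) (circ c b)"
  using bilinear_circ unfolding bilinear_op_def by blast+

lemmas w_circ_expand =
  w_vadd_left w_vadd_right w_vsub_left w_vsub_right circ_vadd_left circ_vadd_right

lemma linear_functional_w_comp: "linear_map f \<Longrightarrow> linear_functional (\<lambda>y. w u (f y))"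
  by (rule linear_functional_comp[OF linear_functional_w])

lemma linear_map_circ_right: "linear_map (circ x)"
  and linear_map_circ_left: "linear_map (\<lambda>y. circ y x)"
  and linear_map_sc_right: "linear_map (sc x)"
  and linear_map_sc_left: "linear_map (\<lambda>y. sc y x)"
  and linear_map_pr_right: "linear_map (pr x)"
  and linear_map_pr_left: "linear_map (\<lambda>y. pr y x)"
  by (simp_all add: bilinear_op_linear_right bilinear_op_linear_left
      bilinear_circ bilinear_sc bilinear_pr)

lemma linear_map_odot: "linear_map (odot_op sc pr x)"
  unfolding odot_op_def by (rule linear_map_vadd[OF linear_map_sc_right linear_map_pr_left])

lemma linear_map_odot_left: "linear_map (\<lambda>y. odot_op sc pr y x)"
  unfolding odot_op_def by (rule linear_map_vadd[OF linear_map_sc_left linear_map_pr_right])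

lemma linear_map_star: "linear_map (\<lambda>y. vadd (circ x y) (circ y x))"
  by (rule linear_map_vadd[OF linear_map_circ_right linear_map_circ_left])

lemma eq_if_w_eq: "(\<And>u. w a u = w b u) \<Longrightarrow> a = b"
proof -
  assume "\<And>u. w a u = w b u"
  then have "vsub a b = vzero" by (simp add: w_nondegenerate w_vsub_left)
  then show "a = b" by (simp add: vsub_def vzero_def fun_eq_iff)
qed

lemma coord_zero_if_w_annihilates:
  assumes "\<And>x. (\<Sum>p\<in>UNIV. v p * w x (bvec p)) = 0"
  shows "v p = 0"
proof -
  have "w v x = 0" for x
    using assms[of x]
    by (simp add: w_sym[of v] linear_functional_expand[OF linear_functional_w, of x v])
  then show ?thesis using w_nondegenerate by (auto simp: vzero_def)
qed

lemma tensor3_eq_0_iff_pairing3: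
  "T = (\<lambda>p q t. 0) \<longleftrightarrow> (\<forall>x y z. pairing3 T (w x) (w y) (w z) = 0)"
proof
  assume vanish: "\<forall>x y z. pairing3 T (w x) (w y) (w z) = 0"
  have "(\<Sum>q\<in>UNIV. \<Sum>t\<in>UNIV. T p q t * (w y (bvec q) * w z (bvec t))) = 0" for p y z
    using vanish coord_zero_if_w_annihilates
      [where v = "\<lambda>p. \<Sum>q\<in>UNIV. \<Sum>t\<in>UNIV. T p q t * (w y (bvec q) * w z (bvec t))"]
    by (simp add: pairing3_def sum_distrib_left sum_distrib_right mult_ac)
  then have "(\<Sum>t\<in>UNIV. T p q t * w z (bvec t)) = 0" for p q z
    using coord_zero_if_w_annihilates[where v = "\<lambda>q. \<Sum>t\<in>UNIV. T p q t * w z (bvec t)"]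
    by (simp add: sum_distrib_left sum_distrib_right mult_ac)
  then have "T p q t = 0" for p q t
    using coord_zero_if_w_annihilates[where v = "T p q"] by simp
  then show "T = (\<lambda>p q t. 0)" by (simp add: fun_eq_iff)
qed (simp add: pairing3_def)

end

definition apN_YBE_tensor ::
  "('k::field, 'n::finite) binop \<Rightarrow> ('k, 'n) binop \<Rightarrow> ('n \<Rightarrow> 'n \<Rightarrow> 'k) \<Rightarrow> 'n \<Rightarrow> 'n \<Rightarrow> 'n \<Rightarrow> 'k"
where
  "apN_YBE_tensor sc pr s =
     (\<lambda>p q t. \<Sum>i\<in>UNIV. \<Sum>j\<in>UNIV. \<Sum>k\<in>UNIV. \<Sum>l\<in>UNIV. s i j * s k l *
        (circ_op sc pr (bvec i) (bvec k) p * bvec j q * bvec l t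
         + bvec k p * bvec i q * odot_op sc pr (bvec j) (bvec l) t
         + bvec i p * pr (bvec j) (bvec k) q * bvec l t))"

lemma apN_YBE_iff_tensor: "apN_YBE sc pr s \<longleftrightarrow> apN_YBE_tensor sc pr s = (\<lambda>p q t. 0)"
  unfolding apN_YBE_def apN_YBE_tensor_def ..

locale quadratic_apN_tensor = quadratic_apN_algebra sc pr w
  for sc pr :: "('k::field, 'n::finite) binop" and w +
  fixes s :: "'n \<Rightarrow> 'n \<Rightarrow> 'k"
begin

definition P :: "('k, 'n) vec \<Rightarrow> ('k, 'n) vec" where
  "P x = T_map s (omega_sharp w x)"

definition Q :: "('k, 'n) vec \<Rightarrow> ('k, 'n) vec" where
  "Q x = T_map (flip s) (omega_sharp w x)"

definition R :: "('k, 'n) vec \<Rightarrow> ('k, 'n) vec" where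
  "R x = T_map (tadd s (flip s)) (omega_sharp w x)"

lemma linear_functional_P: "linear_functional \<phi> \<Longrightarrow> \<phi> (P x) = pairing2 s (w x) \<phi>"
  unfolding P_def by (simp add: linear_functional_T_map)

lemma linear_functional_Q: "linear_functional \<phi> \<Longrightarrow> \<phi> (Q x) = pairing2 s \<phi> (w x)"
  unfolding Q_def by (simp add: linear_functional_T_map pairing2_flip)

lemma w_P_Q: "w (P a) b = w a (Q b)"
  using linear_functional_P[OF linear_functional_w, of b a]
    linear_functional_Q[OF linear_functional_w, of a b]
  by (simp add: w_sym[of b])

lemma R_eq_P_Q: "R y = vadd (P y) (Q y)"
  by (simp add: R_def P_def Q_def T_map_def tadd_def vadd_def sum.distrib algebra_simps fun_eq_iff)

lemma R_vadd: "R (vadd a b) = vadd (R a) (R b)"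
  unfolding R_def T_map_def omega_sharp_apply w_vadd_left
  by (simp add: vadd_def sum.distrib algebra_simps fun_eq_iff)

lemma w_R: "w (R a) b = w a (R b)"
  by (simp add: R_eq_P_Q w_circ_expand w_P_Q) (simp add: w_sym[of a] w_sym[of "Q a"] w_P_Q)

lemma pairing3_apN_YBE_tensor:
  "pairing3 (apN_YBE_tensor sc pr s) (w x) (w y) (w z)
     = w x (circ (Q y) (Q z)) + w z (odot_op sc pr (P y) (P x)) + w y (pr (P x) (Q z))"
proof -
  have Q_Q: "w x (circ (Q y) (Q z))
      = pairing2 s (\<lambda>u. pairing2 s (\<lambda>v. w x (circ u v)) (w z)) (w y)"
    by (subst linear_functional_Q[OF linear_functional_w_comp[OF linear_map_circ_left]])
       (simp only: linear_functional_Q[OF linear_functional_w_comp[OF linear_map_circ_right]])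
  have P_P: "w z (odot_op sc pr (P y) (P x))
      = pairing2 s (w y) (\<lambda>u. pairing2 s (w x) (\<lambda>v. w z (odot_op sc pr u v)))"
    by (subst linear_functional_P[OF linear_functional_w_comp[OF linear_map_odot_left]])
       (simp only: linear_functional_P[OF linear_functional_w_comp[OF linear_map_odot]])
  have P_Q: "w y (pr (P x) (Q z))
      = pairing2 s (w x) (\<lambda>u. pairing2 s (\<lambda>v. w y (pr u v)) (w z))"
    by (subst linear_functional_P[OF linear_functional_w_comp[OF linear_map_pr_left]])
       (simp only: linear_functional_Q[OF linear_functional_w_comp[OF linear_map_pr_right]])
  show ?thesis
    unfolding apN_YBE_tensor_def Q_Q P_P P_Q
    by (simp only: pairing3_sum[OF finite] pairing3_scale pairing3_add
        pairing3_pure[OF linear_functional_w linear_functional_w linear_functional_w])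
       (simp add: pairing2_def distrib_left sum.distrib sum_distrib_left mult_ac)
qed

definition ybe_form :: "('k, 'n) vec \<Rightarrow> ('k, 'n) vec \<Rightarrow> ('k, 'n) vec \<Rightarrow> 'k" where
  "ybe_form x y z = w x (circ (Q y) (Q z)) + w (P x) (circ (P y) z) - w (P x) (circ y (Q z))"

lemma pairing3_apN_YBE_tensor_eq_ybe_form:
  "pairing3 (apN_YBE_tensor sc pr s) (w x) (w y) (w z) = ybe_form x y z"
proof -
  have "w z (odot_op sc pr (P y) (P x)) = w (P x) (circ (P y) z)"
    by (simp add: odot_op_def w_vadd_right w_sym[of z] w_pr w_sc w_vadd_left
        w_sym[of "circ _ _" "P x"])
  moreover have "w y (pr (P x) (Q z)) = - w (P x) (circ y (Q z))"
    by (simp add: w_sym[of y] w_pr)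
  ultimately show ?thesis
    by (simp add: pairing3_apN_YBE_tensor ybe_form_def)
qed

lemma apN_YBE_iff_ybe_form: "apN_YBE sc pr s \<longleftrightarrow> (\<forall>x y z. ybe_form x y z = 0)"
  unfolding apN_YBE_iff_tensor tensor3_eq_0_iff_pairing3 pairing3_apN_YBE_tensor_eq_ybe_form ..

end

locale invariant_quadratic_apN_tensor = quadratic_apN_tensor +
  assumes invariant: "invariant_tensor sc pr (tadd s (flip s))"
begin

lemma pairing2_tadd_flip_commute:
  "pairing2 (tadd s (flip s)) \<zeta> \<eta> = pairing2 (tadd s (flip s)) \<eta> \<zeta>"
proof -
  have "flip (tadd s (flip s)) = tadd s (flip s)"
    by (simp add: flip_def tadd_def fun_eq_iff add.commute)
  then show ?thesis by (metis pairing2_flip)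
qed

lemma linear_functional_R:
  "linear_functional \<phi> \<Longrightarrow> \<phi> (R x) = pairing2 (tadd s (flip s)) (w x) \<phi>"
  unfolding R_def by (simp add: linear_functional_T_map)

(* The two invariance conditions on s + \<tau>(s), paired with \<omega>^\<sharp>(u) \<otimes> \<omega>^\<sharp>(v). *)
lemma w_star_R: "w v (vadd (circ x (R u)) (circ (R u) x)) = w u (sc x (R v))"
proof -
  have "tmap2 (sc x) id (tadd s (flip s))
      = tmap2 id (\<lambda>y. vadd (circ x y) (circ y x)) (tadd s (flip s))"
    using invariant unfolding invariant_tensor_def by simp
  note swap = pairing2_swap_if_tmap2_eq[OF this linear_functional_w linear_functional_w]
  have "w v (vadd (circ x (R u)) (circ (R u) x))
      = pairing2 (tadd s (flip s)) (w u) (\<lambda>y. w v (vadd (circ x y) (circ y x)))"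
    by (rule linear_functional_R[OF linear_functional_w_comp[OF linear_map_star]])
  also have "\<dots> = pairing2 (tadd s (flip s)) (w v) (\<lambda>y. w u (sc x y))"
    by (simp add: swap[symmetric] pairing2_tadd_flip_commute[of _ "w v"])
  also have "\<dots> = w u (sc x (R v))"
    by (rule linear_functional_R[OF linear_functional_w_comp[OF linear_map_sc_right],
          symmetric])
  finally show ?thesis .
qed

lemma w_circ_R: "w u (circ x (R v)) = w v (odot_op sc pr x (R u))"
proof -
  have "tmap2 (circ x) id (tadd s (flip s)) = tmap2 id (odot_op sc pr x) (tadd s (flip s))"
    using invariant unfolding invariant_tensor_def by simp
  note swap = pairing2_swap_if_tmap2_eq[OF this linear_functional_w linear_functional_w]
  have "w u (circ x (R v)) = pairing2 (tadd s (flip s)) (w v) (\<lambda>y. w u (circ x y))"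
    by (rule linear_functional_R[OF linear_functional_w_comp[OF linear_map_circ_right]])
  also have "\<dots> = pairing2 (tadd s (flip s)) (w u) (\<lambda>y. w v (odot_op sc pr x y))"
    by (simp add: swap pairing2_tadd_flip_commute[of "w v"])
  also have "\<dots> = w v (odot_op sc pr x (R u))"
    by (rule linear_functional_R[OF linear_functional_w_comp[OF linear_map_odot], symmetric])
  finally show ?thesis .
qed

lemma circ_R_right: "circ x (R v) = R (circ x v)"
proof (rule eq_if_w_eq)
  fix u
  have "w (circ x (R v)) u = w v (odot_op sc pr x (R u))"
    by (simp add: w_sym[of _ u] w_circ_R)
  also have "\<dots> = w (sc x (R u)) v + w (pr (R u) x) v"
    by (simp add: odot_op_def w_vadd_right w_sym[of v])
  also have "\<dots> = w (circ x v) (R u)"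
    by (simp add: w_pr w_sc w_vadd_left w_sym[of "R u"])
  also have "\<dots> = w (R (circ x v)) u"
    by (simp add: w_R)
  finally show "w (circ x (R v)) u = w (R (circ x v)) u" .
qed

lemma star_R: "vadd (circ x (R u)) (circ (R u) x) = R (vadd (circ x u) (circ u x))"
proof (rule eq_if_w_eq)
  fix v
  have "w (vadd (circ x (R u)) (circ (R u) x)) v = w u (sc x (R v))"
    by (simp add: w_sym[of _ v] w_star_R)
  also have "\<dots> = w (vadd (circ x u) (circ u x)) (R v)"
    by (simp add: w_sym[of u] w_sc)
  also have "\<dots> = w (R (vadd (circ x u) (circ u x))) v"
    by (simp add: w_R)
  finally show "w (vadd (circ x (R u)) (circ (R u) x)) v
      = w (R (vadd (circ x u) (circ u x))) v" .
qed

lemma circ_R_left: "circ (R u) x = R (circ u x)"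
proof -
  have "vadd (circ x (R u)) (circ (R u) x) = vadd (circ x (R u)) (R (circ u x))"
    using star_R by (simp add: R_vadd circ_R_right)
  then show ?thesis by (simp add: vadd_def fun_eq_iff)
qed

lemma w_circ_R_balanced:
  "w a (circ z (P y)) + w a (circ z (Q y)) = w a (circ (P z) y) + w a (circ (Q z) y)"
proof -
  have "w a (circ z (R y)) = w a (circ (R z) y)"
    by (simp add: circ_R_left circ_R_right)
  then show ?thesis by (simp add: R_eq_P_Q w_circ_expand)
qed

lemma w_pr_defect:
  "w (pr (P x) (P y)) z - w (P (vsub (vadd (pr (P x) y) (pr x (P y))) (pr x (R y)))) z
     = - ybe_form x z y"
  using w_circ_R_balanced[of "P x" z y]
  by (simp add: w_P_Q ybe_form_def w_circ_expand w_pr R_eq_P_Q algebra_simps)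

lemma w_sc_defect:
  "w (sc (P x) (P y)) z - w (P (vsub (vadd (sc (P x) y) (sc x (P y))) (sc x (R y)))) z
     = ybe_form y x z + ybe_form y z x"
proof -
  have "w (circ x (Q z)) (R y) = w (circ (R x) (Q z)) y"
    by (simp add: w_R circ_R_left)
  then have left: "w (circ x (Q z)) (R y) = w (circ (P x) (Q z)) y + w (circ (Q x) (Q z)) y"
    by (simp add: R_eq_P_Q w_circ_expand)
  have "w (circ (Q z) x) (R y) = w (circ (Q z) (R x)) y"
    by (simp add: w_R circ_R_right)
  then have right: "w (circ (Q z) x) (R y) = w (circ (Q z) (P x)) y + w (circ (Q z) (Q x)) y"
    by (simp add: R_eq_P_Q w_circ_expand)
  show ?thesis
    using w_circ_R_balanced[of "P y" z x]
    by (simp add: w_P_Q ybe_form_def w_vadd_left w_vsub_left w_sc left right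
        w_sym[of "circ _ _" y] w_sym[of "circ _ _" "P y"] algebra_simps)
qed

lemma apN_YBE_iff_P_identities:
  "apN_YBE sc pr s \<longleftrightarrow>
    (\<forall>x y.
       sc (P x) (P y) = P (vsub (vadd (sc (P x) y) (sc x (P y))) (sc x (R y))) \<and>
       pr (P x) (P y) = P (vsub (vadd (pr (P x) y) (pr x (P y))) (pr x (R y))))"
  (is "_ \<longleftrightarrow> ?identities")
proof -
  have "?identities \<longleftrightarrow> (\<forall>x y z. ybe_form x y z = 0)"
  proof
    assume ?identities
    then have "ybe_form x z y = 0" for x y z
      using w_pr_defect[of x y z] by simp
    then show "\<forall>x y z. ybe_form x y z = 0" by blast
  next
    assume "\<forall>x y z. ybe_form x y z = 0"
    then show ?identities
      using w_sc_defect w_pr_defect by (auto intro!: eq_if_w_eq)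
  qed
  then show ?thesis by (simp add: apN_YBE_iff_ybe_form)
qed

end

theorem mainTheorem15:
  fixes sc pr :: "('k::field, 'n::finite) binop"
    and w :: "('k, 'n) vec \<Rightarrow> ('k, 'n) vec \<Rightarrow> 'k"
    and s :: "'n \<Rightarrow> 'n \<Rightarrow> 'k"
    and P :: "('k, 'n) vec \<Rightarrow> ('k, 'n) vec"
  assumes quad: "quadratic_apN sc pr w"
    and inv: "invariant_tensor sc pr (tadd s (flip s))"
    and P_def: "\<And>x. P x = T_map s (omega_sharp w x)"
  shows "apN_YBE sc pr s \<longleftrightarrow>
    (\<forall>x y.
       sc (P x) (P y) = P (vsub (vadd (sc (P x) y) (sc x (P y)))
                                (sc x (T_map (tadd s (flip s)) (omega_sharp w y)))) \<and>
       pr (P x) (P y) = P (vsub (vadd (pr (P x) y) (pr x (P y)))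
                                (pr x (T_map (tadd s (flip s)) (omega_sharp w y)))))"
proof -
  interpret T: invariant_quadratic_apN_tensor sc pr w s
    using quad inv by unfold_locales
  have "P = T.P"
    by (simp add: fun_eq_iff P_def T.P_def)
  then show ?thesis
    using T.apN_YBE_iff_P_identities by (simp add: T.R_def)
qed

end
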